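(* Let $X$ be a real Hilbert space, let $\rho>-1$ and let $A\colon X\rightrightarrows X$ be $\rho$-comonotone with $\operatorname{ran}(\mathrm{Id}+A)=X$. Then $A$ is maximally $\rho$-comonotone.
   Context: For $\rho\in\mathbb R$, $A\colon X\rightrightarrows X$ is $\rho$-comonotone if $\langle x-y,u-v\rangle\ge\rho\|u-v\|^2$ for all $(x,u),(y,v)\in\operatorname{gra}A$; maximally $\rho$-comonotone if moreover no $\rho$-comonotone operator has a graph properly containing $\operatorname{gra}A$. *)

theory Defs
  imports "HOL-Analysis.Analysis"
begin

text \<open>A set-valued operator A : X \<rightrightarrows> X is represented by its graph, a relation on X.
  (x,u) \<in> A means u \<in> A x.\<close>

definition comonotone :: "real \<Rightarrow> ('a::real_inner \<times> 'a) set \<Rightarrow> bool" where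
  "comonotone \<rho> A \<longleftrightarrow>
     (\<forall>x u y v. (x, u) \<in> A \<longrightarrow> (y, v) \<in> A \<longrightarrow> inner (x - y) (u - v) \<ge> \<rho> * (norm (u - v))\<^sup>2)"

definition max_comonotone :: "real \<Rightarrow> ('a::real_inner \<times> 'a) set \<Rightarrow> bool" where
  "max_comonotone \<rho> A \<longleftrightarrow>
     comonotone \<rho> A \<and> (\<forall>B. comonotone \<rho> B \<longrightarrow> A \<subseteq> B \<longrightarrow> B = A)"

definition ran_Id_plus :: "('a::real_vector \<times> 'a) set \<Rightarrow> 'a set" where
  "ran_Id_plus A = {x + u | x u. (x, u) \<in> A}"

end

theory Submission
  imports Defs
begin

text \<open>For \<open>\<rho> > -1\<close> a \<open>\<rho>\<close>-comonotone graph meets every fibre of \<open>(x, u) \<mapsto> x + u\<close> at most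
  once. A comonotone extension \<open>B\<close> of \<open>A\<close> therefore cannot contain a point outside \<open>A\<close>: since
  \<open>Id + A\<close> is onto, \<open>A\<close> already has a point of \<open>B\<close> in the same fibre.\<close>

lemma comonotone_eq_if_sum_eq:
  fixes B :: "('a::real_inner \<times> 'a) set"
  assumes "\<rho> > -1" and "comonotone \<rho> B"
    and "(x, u) \<in> B" and "(y, v) \<in> B" and sum_eq: "x + u = y + v"
  shows "x = y \<and> u = v"
proof -
  have "x - y = - (u - v)" using sum_eq by (simp add: algebra_simps)
  then have "inner (x - y) (u - v) = - (norm (u - v))\<^sup>2"
    by (simp add: power2_norm_eq_inner del: minus_diff_eq)
  moreover have "inner (x - y) (u - v) \<ge> \<rho> * (norm (u - v))\<^sup>2"
    using assms(2-4) unfolding comonotone_def by blast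
  ultimately have "(1 + \<rho>) * (norm (u - v))\<^sup>2 \<le> 0" by (simp add: algebra_simps)
  with \<open>\<rho> > -1\<close> have "u = v"
    by (simp add: mult_le_0_iff)
  with sum_eq show ?thesis by simp
qed

theorem proposition2p15:
  fixes A :: "('a::{real_inner, complete_space} \<times> 'a) set" and \<rho> :: real
  assumes "\<rho> > -1"
    and "comonotone \<rho> A"
    and "ran_Id_plus A = UNIV"
  shows "max_comonotone \<rho> A"
  unfolding max_comonotone_def
proof (intro conjI allI impI)
  show "comonotone \<rho> A" by fact
  fix B :: "('a \<times> 'a) set"
  assume B: "comonotone \<rho> B" and "A \<subseteq> B"
  have "(y, v) \<in> A" if "(y, v) \<in> B" for y v
  proof -
    have "y + v \<in> ran_Id_plus A" using assms(3) by simp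
    then obtain x u where "(x, u) \<in> A" and "x + u = y + v"
      unfolding ran_Id_plus_def by auto
    with comonotone_eq_if_sum_eq[OF assms(1) B] \<open>A \<subseteq> B\<close> \<open>(y, v) \<in> B\<close> show ?thesis
      by blast
  qed
  with \<open>A \<subseteq> B\<close> show "B = A" by auto
qed

end
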